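(* Let $\alpha=\exp\left(\frac{2\pi i}{5}\right)$, let $c,x\in\mathbb{C}$, and let $(a_1,A_1),\dots,(a_p,A_p)$ and $(b_1,B_1),\dots,(b_q,B_q)$ be parameter pairs ($a_j,b_j\in\mathbb{C}$, $A_j,B_j$ nonzero reals) such that all Gamma functions involved are well defined and all series involved converge. Then $$\sum_{k=0}^{4}{}_p\Psi_q\left[\begin{array}{c}(a_1,A_1),\dots,(a_p,A_p);\\(b_1,B_1),\dots,(b_q,B_q);\end{array} c(x\alpha^k)^2\right] =5\prod_{i=1}^{4}\Gamma\!\left(\tfrac{i}{5}\right)\,{}_p\Psi_{q+4}\left[\begin{array}{c}(a_1,5A_1),\dots,(a_p,5A_p);\\ \left(\tfrac15,1\right),\left(\tfrac25,1\right),\left(\tfrac35,1\right),\left(\tfrac45,1\right),(b_1,5B_1),\dots,(b_q,5B_q);\end{array}\left(\frac{cx^2}{5}\right)^5\right].$$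
   Context: The Fox–Wright function is defined by the series $${}_p\Psi_q\left[\begin{array}{c}(\alpha_1,A_1),\dots,(\alpha_p,A_p);\\(\beta_1,B_1),\dots,(\beta_q,B_q);\end{array}z\right]=\sum_{n=0}^{\infty}\frac{\Gamma(\alpha_1+A_1n)\cdots\Gamma(\alpha_p+A_pn)}{\Gamma(\beta_1+B_1n)\cdots\Gamma(\beta_q+B_qn)}\frac{z^n}{n!},$$ where $\alpha_i,\beta_j\in\mathbb{C}$ and $A_i,B_j$ are nonzero real numbers chosen so that the Gamma products are well defined. Values of parameters and variables for which the expressions do not make sense are excluded. *)

theory Defs
  imports "HOL-Analysis.Analysis"
begin

definition fw_term :: "(complex \<times> real) list \<Rightarrow> (complex \<times> real) list \<Rightarrow> complex \<Rightarrow> nat \<Rightarrow> complex" where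
  "fw_term as bs z n =
     (\<Prod>(a, A) \<leftarrow> as. Gamma (a + of_real A * of_nat n)) /
     (\<Prod>(b, B) \<leftarrow> bs. Gamma (b + of_real B * of_nat n)) * z ^ n / fact n"

definition FoxWright :: "(complex \<times> real) list \<Rightarrow> (complex \<times> real) list \<Rightarrow> complex \<Rightarrow> complex" where
  "FoxWright as bs z = (\<Sum>n. fw_term as bs z n)"

definition fw_welldef :: "(complex \<times> real) list \<Rightarrow> bool" where
  "fw_welldef ps \<longleftrightarrow> (\<forall>(a, A) \<in> set ps. A \<noteq> 0 \<and> (\<forall>n::nat. a + of_real A * of_nat n \<notin> \<int>\<^sub>\<le>\<^sub>0))"

end

theory Submission
  imports Defs
begin

text \<open>
  Write \<open>z = c x\<^sup>2\<close> and \<open>\<omega> = \<alpha>\<^sup>2\<close>, a primitive fifth root of unity. The \<open>n\<close>-th term of the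
  \<open>k\<close>-th series on the left is the \<open>n\<close>-th term of the series at \<open>z\<close> times \<open>\<omega>\<^sup>k\<^sup>n\<close>, and
  \<open>\<Sum>\<^sub>k \<omega>\<^sup>k\<^sup>n\<close> is \<open>5\<close> or \<open>0\<close> according as \<open>5\<close> divides \<open>n\<close>, so the left side is five times the
  subseries of the terms with index \<open>5m\<close>. That subseries is the Fox-Wright series on the
  right: by the identity \<open>(5m)! = 5\<^sup>5\<^sup>m \<Prod>\<^sub>i\<^sub>=\<^sub>1\<^sup>5 (i/5)\<^sub>m\<close> for Pochhammer symbols, dividing by
  \<open>(5m)!\<close> amounts to dividing by \<open>m! 5\<^sup>5\<^sup>m\<close> and by \<open>\<Gamma>(i/5 + m) / \<Gamma>(i/5)\<close> for \<open>i = 1, \<dots>, 4\<close>.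
\<close>

lemma fact_add_eq_prod:
  "fact (n + k) = fact n * (\<Prod>j\<in>{1..k}. of_nat (n + j) :: 'a::{comm_semiring_1,semiring_char_0})"
proof (induction k)
  case (Suc k)
  then show ?case by (simp add: prod.nat_ivl_Suc' algebra_simps)
qed simp

lemma fact_mult_eq_prod_pochhammer:
  assumes "N > 0"
  shows "fact (N * m) =
           of_nat N ^ (N * m) * (\<Prod>i\<in>{1..N}. pochhammer (of_nat i / of_nat N) m :: 'a::field_char_0)"
proof (induction m)
  case (Suc m)
  have block: "(\<Prod>j\<in>{1..N}. of_nat (N * m + j) :: 'a) =
                 of_nat N ^ N * (\<Prod>i\<in>{1..N}. of_nat i / of_nat N + of_nat m)"
  proof -
    have "(\<Prod>j\<in>{1..N}. of_nat (N * m + j) :: 'a) =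
            (\<Prod>i\<in>{1..N}. of_nat N * (of_nat i / of_nat N + of_nat m))"
      using assms by (intro prod.cong) (simp_all add: field_simps)
    then show ?thesis by (simp add: prod.distrib)
  qed
  have "fact (N * Suc m) = (fact (N * m) :: 'a) * (\<Prod>j\<in>{1..N}. of_nat (N * m + j))"
    using fact_add_eq_prod[of "N * m" N] by (simp add: add.commute)
  also have "\<dots> = of_nat N ^ (N * Suc m) * (\<Prod>i\<in>{1..N}. pochhammer (of_nat i / of_nat N) (Suc m))"
    unfolding Suc block pochhammer_rec' by (simp add: prod.distrib power_add mult_ac add_ac)
  finally show ?case .
qed simp

lemma Re_pos_not_nonpos_Ints: "0 < Re z \<Longrightarrow> z \<notin> \<int>\<^sub>\<le>\<^sub>0"
  using nonpos_Ints_subset_nonpos_Reals by (force simp: complex_nonpos_Reals_iff)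

lemma Gamma_fraction_nonzero:
  assumes "0 < i" "0 < N"
  shows "Gamma (of_nat i / of_nat N :: complex) \<noteq> 0"
  using assms by (simp add: Gamma_eq_zero_iff Re_pos_not_nonpos_Ints)

lemma fact_mult_prod_Gamma_fractions:
  assumes "N > 0"
  shows "fact (N * m) * (\<Prod>i\<in>{1..<N}. Gamma (of_nat i / of_nat N)) =
           of_nat N ^ (N * m) * fact m * (\<Prod>i\<in>{1..<N}. Gamma (of_nat i / of_nat N + of_nat m :: complex))"
proof -
  have Gamma_shift: "Gamma (of_nat i / of_nat N + of_nat m :: complex) =
                       Gamma (of_nat i / of_nat N) * pochhammer (of_nat i / of_nat N) m"
    if "0 < i" for i
    using that assms pochhammer_Gamma[of "of_nat i / of_nat N :: complex" m]
      Gamma_fraction_nonzero[of i N] by (simp add: Re_pos_not_nonpos_Ints)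
  have "{1..N} = insert N {1..<N}" using assms by auto
  then have "fact (N * m) = of_nat N ^ (N * m) * fact m *
               (\<Prod>i\<in>{1..<N}. pochhammer (of_nat i / of_nat N :: complex) m)"
    using assms fact_mult_eq_prod_pochhammer[of N m] by (simp add: pochhammer_fact mult_ac)
  moreover have "(\<Prod>i\<in>{1..<N}. Gamma (of_nat i / of_nat N + of_nat m :: complex)) =
      (\<Prod>i\<in>{1..<N}. Gamma (of_nat i / of_nat N)) * (\<Prod>i\<in>{1..<N}. pochhammer (of_nat i / of_nat N) m)"
    by (simp add: Gamma_shift prod.distrib[symmetric])
  ultimately show ?thesis
    by (simp add: mult_ac)
qed

lemma sum_root_of_unity_powers:
  fixes N j n :: nat
  defines "\<omega> \<equiv> exp (2 * of_real pi * \<i> * of_nat j / of_nat N)"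
  assumes "N > 0" and "coprime j N"
  shows "(\<Sum>k<N. \<omega> ^ (k * n)) = (if N dvd n then of_nat N else 0)"
proof -
  have \<omega>_power: "\<omega> ^ n = exp (2 * of_real pi * \<i> * of_nat (j * n) / of_nat N)" for n
    unfolding \<omega>_def exp_of_nat_mult[symmetric] by (simp add: field_simps)
  have root_one: "\<omega> ^ n = 1 \<longleftrightarrow> N dvd n" for n
    using assms(2,3) complex_root_unity_eq_1[where n = N and j = "j * n"] unfolding \<omega>_power
    by (simp add: coprime_dvd_mult_right_iff coprime_commute)
  have sum_eq: "(\<Sum>k<N. \<omega> ^ (k * n)) = (\<Sum>k<N. (\<omega> ^ n) ^ k)"
    by (simp add: power_mult[symmetric] mult.commute)
  show ?thesis
  proof (cases "N dvd n")
    case False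
    have "(\<omega> ^ n) ^ N = 1"
      using root_one[of "n * N"] by (simp add: power_mult[symmetric])
    with False show ?thesis
      unfolding sum_eq using root_one by (simp add: geometric_sum)
  next
    case True
    then have "\<omega> ^ n = 1" using root_one by simp
    with True show ?thesis unfolding sum_eq by simp
  qed
qed

lemma suminf_multisection_roots_of_unity:
  fixes g :: "nat \<Rightarrow> complex" and N j :: nat
  defines "\<omega> \<equiv> exp (2 * of_real pi * \<i> * of_nat j / of_nat N)"
  assumes "N > 0" and "coprime j N"
    and summable: "\<And>k. k < N \<Longrightarrow> summable (\<lambda>n. g n * \<omega> ^ (k * n))"
  shows "(\<Sum>k<N. \<Sum>n. g n * \<omega> ^ (k * n)) = of_nat N * (\<Sum>m. g (N * m))"
proof -
  define f where "f n = (if N dvd n then of_nat N * g n else 0)" for n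
  have f_eq: "(\<lambda>n. \<Sum>k<N. g n * \<omega> ^ (k * n)) = f"
    using assms(2,3) by (auto simp: f_def \<omega>_def sum_distrib_left[symmetric] sum_root_of_unity_powers)
  have "(\<Sum>k<N. \<Sum>n. g n * \<omega> ^ (k * n)) = (\<Sum>n. \<Sum>k<N. g n * \<omega> ^ (k * n))"
    using summable by (intro suminf_sum[symmetric]) simp
  also have "\<dots> = suminf f" by (simp add: f_eq)
  finally have lhs: "(\<Sum>k<N. \<Sum>n. g n * \<omega> ^ (k * n)) = suminf f" .
  have "summable f"
    unfolding f_eq[symmetric] using summable by (intro summable_sum) simp
  moreover have "strict_mono (\<lambda>m. N * m)"
    using assms(2) by (intro strict_monoI) simp
  ultimately have "(\<lambda>m. f (N * m)) sums suminf f"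
    by (subst sums_mono_reindex) (auto simp: f_def summable_sums)
  then have "(\<lambda>m. of_nat N * g (N * m) / of_nat N) sums (suminf f / of_nat N)"
    unfolding f_def by (intro sums_divide) simp
  then have "(\<Sum>m. g (N * m)) = suminf f / of_nat N"
    using assms(2) by (simp add: sums_iff)
  then show ?thesis
    unfolding lhs using assms(2) by simp
qed

lemma fw_term_mult_power: "fw_term as bs (z * w) n = fw_term as bs z n * w ^ n"
  by (simp add: fw_term_def power_mult_distrib)

lemma prod_list_Gamma_scaled:
  "(\<Prod>(a, A) \<leftarrow> map (\<lambda>(a, A). (a, real N * A)) ps. Gamma (a + of_real A * of_nat m)) =
     (\<Prod>(a, A) \<leftarrow> ps. Gamma (a + of_real A * of_nat (N * m)) :: complex)"
  by (induction ps) (auto simp: algebra_simps)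

text \<open>
  At a pole \<open>Gamma\<close> is \<open>0\<close> and division by \<open>0\<close> yields \<open>0\<close>; the identity holds for these
  junk values too, which is why \<open>theorem3\<close> never uses its \<open>fw_welldef\<close> hypotheses.
\<close>

lemma fw_term_multisection:
  assumes "N > 0"
  shows "(\<Prod>i\<in>{1..<N}. Gamma (of_nat i / of_nat N)) *
           fw_term (map (\<lambda>(a, A). (a, real N * A)) as)
             (map (\<lambda>i. (of_nat i / of_nat N, 1)) [1..<N] @ map (\<lambda>(b, B). (b, real N * B)) bs)
             ((z / of_nat N) ^ N) m =
         fw_term as bs z (N * m)"
proof -
  define G where "G = (\<Prod>i\<in>{1..<N}. Gamma (of_nat i / of_nat N :: complex))"
  define H where "H = (\<Prod>i\<in>{1..<N}. Gamma (of_nat i / of_nat N + of_nat m :: complex))"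
  define P where "P = (\<Prod>(a, A) \<leftarrow> as. Gamma (a + of_real A * of_nat (N * m)))"
  define Q where "Q = (\<Prod>(b, B) \<leftarrow> bs. Gamma (b + of_real B * of_nat (N * m)))"
  have G_nonzero: "G \<noteq> 0"
    unfolding G_def using assms Gamma_fraction_nonzero by auto
  have key: "fact (N * m) * G = of_nat N ^ (N * m) * fact m * H"
    unfolding G_def H_def by (rule fact_mult_prod_Gamma_fractions[OF assms])
  have H_nonzero: "H \<noteq> 0"
    using key G_nonzero by auto
  have fractions: "(\<Prod>(b, B) \<leftarrow> map (\<lambda>i. (of_nat i / of_nat N, 1)) [1..<N].
                      Gamma (b + of_real B * of_nat m)) = H"
    unfolding H_def by (simp add: o_def prod.distinct_set_conv_list[symmetric])
  have "G * fw_term (map (\<lambda>(a, A). (a, real N * A)) as)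
           (map (\<lambda>i. (of_nat i / of_nat N, 1)) [1..<N] @ map (\<lambda>(b, B). (b, real N * B)) bs)
           ((z / of_nat N) ^ N) m =
        G * (P / (H * Q) * z ^ (N * m) / (of_nat N ^ (N * m) * fact m))"
    unfolding fw_term_def prod_list_Gamma_scaled map_append prod_list.append fractions
      P_def Q_def by (simp add: power_divide power_mult)
  also have "\<dots> = P / Q * z ^ (N * m) * (G / (of_nat N ^ (N * m) * fact m * H))"
    by (simp add: divide_inverse inverse_mult_distrib ac_simps)
  also have "G / (of_nat N ^ (N * m) * fact m * H) = 1 / fact (N * m)"
    using key G_nonzero H_nonzero assms by (simp add: field_simps)
  finally show ?thesis
    unfolding G_def P_def Q_def fw_term_def by simp
qed

theorem theorem3:
  fixes c x :: complex and as bs :: "(complex \<times> real) list"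
  defines "\<alpha> \<equiv> exp (2 * of_real pi * \<i> / 5)"
  assumes "fw_welldef as" and "fw_welldef bs"
    and "\<And>k. k \<le> 4 \<Longrightarrow> summable (fw_term as bs (c * (x * \<alpha> ^ k)\<^sup>2))"
    and "summable (fw_term (map (\<lambda>(a, A). (a, 5 * A)) as)
           ([(1/5, 1), (2/5, 1), (3/5, 1), (4/5, 1)] @ map (\<lambda>(b, B). (b, 5 * B)) bs)
           ((c * x\<^sup>2 / 5) ^ 5))"
  shows "(\<Sum>k\<le>4. FoxWright as bs (c * (x * \<alpha> ^ k)\<^sup>2)) =
         5 * (\<Prod>i\<in>{1..4::nat}. Gamma (of_nat i / 5)) *
         FoxWright (map (\<lambda>(a, A). (a, 5 * A)) as)
           ([(1/5, 1), (2/5, 1), (3/5, 1), (4/5, 1)] @ map (\<lambda>(b, B). (b, 5 * B)) bs)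
           ((c * x\<^sup>2 / 5) ^ 5)"
proof -
  define \<omega> where "\<omega> = exp (2 * of_real pi * \<i> * of_nat 2 / of_nat 5 :: complex)"
  define g where "g = fw_term as bs (c * x\<^sup>2)"
  have "\<alpha>\<^sup>2 = \<omega>"
    unfolding \<alpha>_def \<omega>_def exp_of_nat_mult[symmetric, where n = 2] by (simp add: field_simps)
  then have argument: "c * (x * \<alpha> ^ k)\<^sup>2 = c * x\<^sup>2 * \<omega> ^ k" for k
    by (metis power_mult power_mult_distrib mult.commute mult.assoc)
  have twisted: "fw_term as bs (c * (x * \<alpha> ^ k)\<^sup>2) = (\<lambda>n. g n * \<omega> ^ (k * n))" for k
    unfolding g_def by (rule ext) (simp only: argument fw_term_mult_power power_mult)
  have "(\<Sum>k\<le>4. FoxWright as bs (c * (x * \<alpha> ^ k)\<^sup>2)) = (\<Sum>k<5. \<Sum>n. g n * \<omega> ^ (k * n))"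
    unfolding FoxWright_def twisted by (simp add: atMost_nat_numeral lessThan_nat_numeral)
  also have "\<dots> = 5 * (\<Sum>m. g (5 * m))"
    using assms(4) unfolding \<omega>_def twisted
    by (subst suminf_multisection_roots_of_unity) (auto simp: \<omega>_def)
  also have "\<dots> = 5 * (\<Sum>m. (\<Prod>i\<in>{1..4::nat}. Gamma (of_nat i / 5)) *
                      fw_term (map (\<lambda>(a, A). (a, 5 * A)) as)
                        ([(1/5, 1), (2/5, 1), (3/5, 1), (4/5, 1)] @ map (\<lambda>(b, B). (b, 5 * B)) bs)
                        ((c * x\<^sup>2 / 5) ^ 5) m)"
    using fw_term_multisection[of 5 as bs "c * x\<^sup>2"] atLeastLessThanSuc_atLeastAtMost[of 1 4]
    by (simp add: g_def upt_rec)
  finally show ?thesis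
    unfolding FoxWright_def using assms(5) by (simp add: suminf_mult mult.assoc)
qed

end
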